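(* Almost surely under the annealed law $\mathbb{P}$, $$\frac1t\,[Y]_t\longrightarrow \eta^2\qquad(t\to\infty),$$ where $([Y]_t)_{ij}=\sum_{0\le r<t}(Y^i_{r+1}-Y^i_r)(Y^j_{r+1}-Y^j_r)$ and $(\eta^2)_{ij}=\sum_{u\in\mathbb{Z}^n}(u_i-b_i)(u_j-b_j)\bar P(u)$.
   Context: Let $\mathbb{S}$ be a finite set and $\pi$ a probability measure on $\mathbb{S}$. The environment $\xi=\{\xi_t(x): x\in\mathbb{Z}^n, t\in\mathbb{Z}^+\}$ consists of i.i.d. $\mathbb{S}$-valued random variables with law $\pi$; $\Pi$ denotes its law. Let $P_0$ be a probability distribution on $\mathbb{Z}^n$ and $c:\mathbb{Z}^n\times\mathbb{S}\to\mathbb{R}$ such that: $0\le P_0(u)+c(u,s)\le 1$ for all $u,s$; $\sum_{u}c(u,s)=0$ for all $s$; $\sum_{s}c(u,s)\pi(s)=0$ for all $u$; $P_0$ and $c$ have bounded range; and there is $b^c\in\mathbb{R}^n$ with $\sum_u u\,c(u,s)=b^c$ for all $s$. Given $\xi$, $(X_t)$ is the Markov chain on $\mathbb{Z}^n$ (from a fixed starting point) with $\mathbb{P}(X_{t+1}=y\mid X_t=x,\xi)=P_0(y-x)+c(y-x,\xi_t(x))$; $\mathbb{P}_\xi$ denotes this quenched law and $\mathbb{P}=\int\mathbb{P}_\xi\,\Pi(d\xi)$ the annealed (joint) law. Let $\bar P(u)=P_0(u)+\sum_s\pi(s)c(u,s)$, $b^0=\sum_u uP_0(u)$, $b=b^0+b^c$,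 $Y_t=X_t-tb$. *)

theory Defs
  imports "HOL-Probability.Probability"
begin

text \<open>Lattice points of Z^n are modelled as int^'n, with 'n a finite index type (n = CARD('n)).
  The real embedding of a lattice point:\<close>
definition rvec :: "int ^ 'n \<Rightarrow> real ^ 'n" where
  "rvec u = (\<chi> i. real_of_int (u $ i))"

definition Pbar :: "'s::finite pmf \<Rightarrow> (int ^ 'n \<Rightarrow> real) \<Rightarrow> (int ^ 'n \<Rightarrow> 's \<Rightarrow> real)
    \<Rightarrow> int ^ 'n \<Rightarrow> real" where
  "Pbar \<pi> P0 c u = P0 u + (\<Sum>s\<in>UNIV. pmf \<pi> s * c u s)"

definition quad_var :: "(nat \<Rightarrow> real ^ 'n) \<Rightarrow> nat \<Rightarrow> real ^ 'n ^ 'n" where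
  "quad_var Y t = (\<chi> i j. \<Sum>r<t. (Y (Suc r) $ i - Y r $ i) * (Y (Suc r) $ j - Y r $ j))"

text \<open>eta^2_{ij} = sum_{u in Z^n} (u_i - b_i)(u_j - b_j) Pbar(u); the sum is taken over a finite set
  R outside of which Pbar vanishes (bounded range).\<close>
definition eta2 :: "(int ^ 'n) set \<Rightarrow> (int ^ 'n \<Rightarrow> real) \<Rightarrow> real ^ 'n \<Rightarrow> real ^ 'n ^ 'n" where
  "eta2 R Pb b = (\<chi> i j. \<Sum>u\<in>R. (rvec u $ i - b $ i) * (rvec u $ j - b $ j) * Pb u)"

end

theory Submission
  imports Defs
begin

text \<open>Under the annealed law the increments \<open>X (r+1) - X r\<close> are i.i.d. with law \<open>Pbar\<close>: at time
  \<open>r\<close> the walk reads the environment at the space-time point \<open>(r, X r)\<close>, which no earlier step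
  has read, so summing out that environment variable turns the quenched kernel into its
  \<open>\<pi>\<close>-average \<open>Pbar\<close>. Each entry of \<open>[Y]_t / t\<close> is then an empirical mean of a bounded
  function of these increments, and the strong law of large numbers for bounded independent
  variables (Hoeffding's inequality plus Borel-Cantelli) identifies the limit. This works for
  every centring vector.\<close>

lemma (in prob_space) AE_tendsto_of_summable_deviation:
  fixes Y :: "nat \<Rightarrow> 'a \<Rightarrow> real"
  assumes [measurable]: "\<And>t. Y t \<in> borel_measurable M"
    and summable: "\<And>\<epsilon>. 0 < \<epsilon> \<Longrightarrow> summable (\<lambda>t. prob {\<omega>\<in>space M. \<epsilon> \<le> \<bar>Y t \<omega> - m\<bar>})"
  shows "AE \<omega> in M. (\<lambda>t. Y t \<omega>) \<longlonglongrightarrow> m"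
proof -
  have "AE \<omega> in M. eventually (\<lambda>t. \<bar>Y t \<omega> - m\<bar> < 1 / Suc k) sequentially" for k :: nat
  proof -
    have "AE \<omega> in M. eventually (\<lambda>t. \<omega> \<in> space M - {\<omega>\<in>space M. 1 / Suc k \<le> \<bar>Y t \<omega> - m\<bar>}) sequentially"
      by (rule borel_cantelli_AE1) (auto simp: less_top[symmetric] intro: summable)
    then show ?thesis
      by eventually_elim (auto elim: eventually_mono)
  qed
  then have "AE \<omega> in M. \<forall>k::nat. eventually (\<lambda>t. \<bar>Y t \<omega> - m\<bar> < 1 / Suc k) sequentially"
    by (subst AE_all_countable) blast
  then show ?thesis
  proof eventually_elim
    case (elim \<omega>)
    show ?case
    proof (rule tendstoI)
      fix e :: real assume "0 < e"
      then obtain k :: nat where "1 / Suc k < e" by (rule nat_approx_posE)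
      from elim have "eventually (\<lambda>t. \<bar>Y t \<omega> - m\<bar> < 1 / Suc k) sequentially" ..
      then show "eventually (\<lambda>t. dist (Y t \<omega>) m < e) sequentially"
        by eventually_elim (use \<open>1 / Suc k < e\<close> in \<open>simp add: dist_real_def\<close>)
    qed
  qed
qed

lemma (in prob_space) Hoeffding_tail_geometric:
  fixes Z :: "nat \<Rightarrow> 'a \<Rightarrow> real"
  assumes indep: "indep_vars (\<lambda>_. borel) Z {..<t}"
    and bounded: "\<And>r. AE \<omega> in M. Z r \<omega> \<in> {a..b}"
    and mean: "\<And>r. expectation (Z r) = m"
    and "a < b" "0 < t" "0 < \<epsilon>"
  shows "prob {\<omega>\<in>space M. real t * \<epsilon> \<le> \<bar>(\<Sum>r<t. Z r \<omega>) - real t * m\<bar>}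
    \<le> 2 * exp (- 2 * \<epsilon>\<^sup>2 / (b - a)\<^sup>2) ^ t"
proof -
  interpret Hoeffding_ineq M "{..<t}" Z "\<lambda>_. a" "\<lambda>_. b" "real t * m"
    by unfold_locales (use indep bounded in \<open>auto simp: mean\<close>)
  have "prob {\<omega>\<in>space M. real t * \<epsilon> \<le> \<bar>(\<Sum>r<t. Z r \<omega>) - real t * m\<bar>}
      \<le> 2 * exp (- 2 * (real t * \<epsilon>)\<^sup>2 / (\<Sum>r<t. (b - a)\<^sup>2))"
    by (rule Hoeffding_ineq_abs_ge) (use assms in auto)
  also have "- 2 * (real t * \<epsilon>)\<^sup>2 / (\<Sum>r<t. (b - a)\<^sup>2) = real t * (- 2 * \<epsilon>\<^sup>2 / (b - a)\<^sup>2)"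
  proof -
    define d where "d = (b - a)\<^sup>2"
    have "d > 0" using \<open>a < b\<close> by (simp add: d_def)
    then show ?thesis
      using \<open>0 < t\<close> unfolding d_def[symmetric] by (simp add: field_simps power2_eq_square)
  qed
  also have "exp (real t * (- 2 * \<epsilon>\<^sup>2 / (b - a)\<^sup>2)) = exp (- 2 * \<epsilon>\<^sup>2 / (b - a)\<^sup>2) ^ t"
    by (rule exp_of_nat_mult)
  finally show ?thesis .
qed

lemma (in prob_space) AE_averages_tendsto_of_indep_bounded:
  fixes Z :: "nat \<Rightarrow> 'a \<Rightarrow> real"
  assumes indep: "\<And>t. indep_vars (\<lambda>_. borel) Z {..<t}"
    and bounded: "\<And>r. AE \<omega> in M. Z r \<omega> \<in> {a..b}"
    and mean: "\<And>r. expectation (Z r) = m"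
    and "a < b"
  shows "AE \<omega> in M. (\<lambda>t. (\<Sum>r<t. Z r \<omega>) / real t) \<longlonglongrightarrow> m"
proof (rule AE_tendsto_of_summable_deviation)
  have [measurable]: "Z r \<in> borel_measurable M" for r
    using indep[of "Suc r"] by (auto simp: indep_vars_def)
  show "(\<lambda>\<omega>. (\<Sum>r<t. Z r \<omega>) / real t) \<in> borel_measurable M" for t
    by measurable
  fix \<epsilon> :: real assume "0 < \<epsilon>"
  have ratio_lt_1: "norm (exp (- 2 * \<epsilon>\<^sup>2 / (b - a)\<^sup>2)) < 1"
    using \<open>0 < \<epsilon>\<close> \<open>a < b\<close> by simp
  show "summable (\<lambda>t. prob {\<omega>\<in>space M. \<epsilon> \<le> \<bar>(\<Sum>r<t. Z r \<omega>) / real t - m\<bar>})"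
  proof (rule summable_comparison_test'[where N=1])
    show "summable (\<lambda>t. 2 * exp (- 2 * \<epsilon>\<^sup>2 / (b - a)\<^sup>2) ^ t)"
      using ratio_lt_1 by (intro summable_mult summable_geometric)
    fix t :: nat assume "1 \<le> t"
    then have "{\<omega>\<in>space M. \<epsilon> \<le> \<bar>(\<Sum>r<t. Z r \<omega>) / real t - m\<bar>}
        = {\<omega>\<in>space M. real t * \<epsilon> \<le> \<bar>(\<Sum>r<t. Z r \<omega>) - real t * m\<bar>}"
      by (auto simp: field_simps abs_divide)
    then show "norm (prob {\<omega>\<in>space M. \<epsilon> \<le> \<bar>(\<Sum>r<t. Z r \<omega>) / real t - m\<bar>})
        \<le> 2 * exp (- 2 * \<epsilon>\<^sup>2 / (b - a)\<^sup>2) ^ t"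
      using Hoeffding_tail_geometric[OF indep bounded mean \<open>a < b\<close> _ \<open>0 < \<epsilon>\<close>, of t] \<open>1 \<le> t\<close>
      by simp
  qed
qed

lemma (in prob_space) expectation_finite_range:
  fixes V :: "'a \<Rightarrow> 'b" and f :: "'b \<Rightarrow> real"
  assumes [measurable]: "V \<in> measurable M (count_space UNIV)"
    and "finite S" and range: "AE \<omega> in M. V \<omega> \<in> S"
  shows "expectation (\<lambda>\<omega>. f (V \<omega>)) = (\<Sum>u\<in>S. f u * prob {\<omega>\<in>space M. V \<omega> = u})"
proof -
  have [measurable]: "(\<lambda>\<omega>. f (V \<omega>)) \<in> borel_measurable M"
    by (rule measurable_compose[of V _ "count_space UNIV"]) simp_all
  have "expectation (\<lambda>\<omega>. f (V \<omega>)) = expectation (\<lambda>\<omega>. \<Sum>u\<in>S. f u * indicator {\<omega>\<in>space M. V \<omega> = u} \<omega>)"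
  proof (rule integral_cong_AE)
    show "AE \<omega> in M. f (V \<omega>) = (\<Sum>u\<in>S. f u * indicator {\<omega>\<in>space M. V \<omega> = u} \<omega>)"
      using range AE_space
    proof eventually_elim
      case (elim \<omega>)
      then have "(\<Sum>u\<in>S. f u * indicator {\<omega>\<in>space M. V \<omega> = u} \<omega>) = (\<Sum>u\<in>S. if u = V \<omega> then f u else 0)"
        by (intro sum.cong) (auto simp: indicator_def)
      with elim \<open>finite S\<close> show ?case by (simp add: sum.delta')
    qed
  qed measurable
  also have "\<dots> = (\<Sum>u\<in>S. f u * prob {\<omega>\<in>space M. V \<omega> = u})"
    by (subst Bochner_Integration.integral_sum) (auto simp: less_top[symmetric])
  finally show ?thesis .
qed

lemma (in prob_space) prob_prefix_in_eq_prod: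
  fixes D :: "nat \<Rightarrow> 'a \<Rightarrow> 'b::countable" and p :: "'b \<Rightarrow> real"
  assumes [measurable]: "\<And>r. D r \<in> measurable M (count_space UNIV)"
    and point_law: "\<And>us. prob {\<omega>\<in>space M. \<forall>r<t. D r \<omega> = us r} = (\<Prod>r<t. p (us r))"
    and "finite S" and p_supp: "\<And>u. u \<notin> S \<Longrightarrow> p u = 0" and p_nonneg: "\<And>u. 0 \<le> p u"
  shows "prob {\<omega>\<in>space M. \<forall>r<t. D r \<omega> \<in> A r} = (\<Prod>r<t. \<Sum>u\<in>A r \<inter> S. p u)"
proof -
  define I where "I = PiE {..<t} A"
  define paths where "paths us = {\<omega>\<in>space M. \<forall>r<t. D r \<omega> = us r}" for us
  have paths_union: "{\<omega>\<in>space M. \<forall>r<t. D r \<omega> \<in> A r} = \<Union>(paths ` I)"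
  proof safe
    fix \<omega> assume "\<omega> \<in> space M" "\<forall>r<t. D r \<omega> \<in> A r"
    then show "\<omega> \<in> \<Union>(paths ` I)"
      by (intro UN_I[of "restrict (\<lambda>r. D r \<omega>) {..<t}"]) (auto simp: paths_def I_def)
  qed (auto simp: paths_def I_def)
  have "disjoint_family_on paths I"
    unfolding disjoint_family_on_def
  proof (intro ballI impI)
    fix us vs assume "us \<in> I" "vs \<in> I" "us \<noteq> vs"
    then obtain r where "r < t" "us r \<noteq> vs r" unfolding I_def by (metis PiE_ext lessThan_iff)
    then show "paths us \<inter> paths vs = {}" by (auto simp: paths_def)
  qed
  then have "emeasure M {\<omega>\<in>space M. \<forall>r<t. D r \<omega> \<in> A r}
      = (\<integral>\<^sup>+us. emeasure M (paths us) \<partial>count_space I)"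
    unfolding paths_union by (intro emeasure_UN_countable) (auto simp: paths_def I_def intro: countable_PiE)
  also have "\<dots> = (\<integral>\<^sup>+us. ennreal (\<Prod>r<t. p (us r)) \<partial>count_space I)"
    by (simp add: emeasure_eq_measure paths_def point_law)
  also have "\<dots> = (\<Sum>us\<in>PiE {..<t} (\<lambda>r. A r \<inter> S). ennreal (\<Prod>r<t. p (us r)))"
  proof (rule nn_integral_count_space')
    fix us assume "us \<in> I" "us \<notin> PiE {..<t} (\<lambda>r. A r \<inter> S)"
    then obtain r where "r < t" "us r \<notin> S" by (auto simp: PiE_iff I_def)
    then show "ennreal (\<Prod>r<t. p (us r)) = 0"
      by (subst prod_zero) (auto simp: p_supp intro!: bexI[of _ r])
  qed (use \<open>finite S\<close> in \<open>auto simp: PiE_iff I_def intro!: finite_PiE\<close>)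
  also have "\<dots> = ennreal (\<Prod>r<t. \<Sum>u\<in>A r \<inter> S. p u)"
    using \<open>finite S\<close> by (simp add: sum_ennreal prod_nonneg p_nonneg prod_sum_PiE)
  finally show ?thesis
    by (simp add: emeasure_eq_measure sum_nonneg p_nonneg prod_nonneg)
qed

lemma (in prob_space) prob_in_eq_of_prefix_law:
  fixes D :: "nat \<Rightarrow> 'a \<Rightarrow> 'b"
  assumes law: "\<And>t A. prob {\<omega>\<in>space M. \<forall>r<t. D r \<omega> \<in> A r} = (\<Prod>r<t. Q (A r))"
    and "Q UNIV = 1"
  shows "prob {\<omega>\<in>space M. D j \<omega> \<in> B} = Q B"
proof -
  have "{\<omega>\<in>space M. D j \<omega> \<in> B} = {\<omega>\<in>space M. \<forall>r<Suc j. D r \<omega> \<in> (if r = j then B else UNIV)}"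
    by auto
  also have "prob \<dots> = (\<Prod>r<Suc j. Q (if r = j then B else UNIV))" by (rule law)
  also have "\<dots> = Q B" by (simp add: \<open>Q UNIV = 1\<close>)
  finally show ?thesis .
qed

lemma (in prob_space) indep_vars_of_prefix_law:
  fixes D :: "nat \<Rightarrow> 'a \<Rightarrow> 'b"
  assumes [measurable]: "\<And>r. D r \<in> measurable M (count_space UNIV)"
    and law: "\<And>t A. prob {\<omega>\<in>space M. \<forall>r<t. D r \<omega> \<in> A r} = (\<Prod>r<t. Q (A r))"
    and "Q UNIV = 1"
  shows "indep_vars (\<lambda>_. count_space UNIV) D {..<t}"
proof (cases "t = 0")
  case True
  then show ?thesis by (simp add: indep_vars_def2 indep_sets_def)
next
  case False
  have "prob (\<Inter>j<t. D j -` A j \<inter> space M) = (\<Prod>j<t. prob (D j -` A j \<inter> space M))" for A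
  proof -
    have "(\<Inter>j<t. D j -` A j \<inter> space M) = {\<omega>\<in>space M. \<forall>r<t. D r \<omega> \<in> A r}"
      using False by auto
    moreover have "D j -` A j \<inter> space M = {\<omega>\<in>space M. D j \<omega> \<in> A j}" for j
      by auto
    ultimately show ?thesis
      using prob_in_eq_of_prefix_law[OF law \<open>Q UNIV = 1\<close>] by (simp add: law)
  qed
  then show ?thesis
    by (subst indep_vars_finite) (use False in \<open>auto simp: Int_stable_def sets.sigma_sets_eq\<close>)
qed

lemma Pbar_eq_sum_kernel:
  "Pbar \<pi> P0 c u = (\<Sum>s\<in>UNIV. pmf \<pi> s * (P0 u + c u s))"
proof -
  have "(\<Sum>s\<in>UNIV. pmf \<pi> s * (P0 u + c u s)) = P0 u * (\<Sum>s\<in>UNIV. pmf \<pi> s) + (\<Sum>s\<in>UNIV. pmf \<pi> s * c u s)"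
    by (simp add: algebra_simps sum.distrib sum_distrib_left)
  then show ?thesis by (simp add: Pbar_def sum_pmf_eq_1)
qed

locale annealed_walk = prob_space M
  for M :: "'w measure" +
  fixes \<pi> :: "'s::finite pmf"
    and P0 :: "int ^ 'n \<Rightarrow> real"
    and c :: "int ^ 'n \<Rightarrow> 's \<Rightarrow> real"
    and R :: "(int ^ 'n) set"
    and x0 :: "int ^ 'n"
    and \<xi> :: "'w \<Rightarrow> nat \<Rightarrow> int ^ 'n \<Rightarrow> 's"
    and X :: "'w \<Rightarrow> nat \<Rightarrow> int ^ 'n"
  assumes R_fin: "finite R"
    and P0_supp: "\<And>u. u \<notin> R \<Longrightarrow> P0 u = 0"
    and c_supp: "\<And>u s. u \<notin> R \<Longrightarrow> c u s = 0"
    and P0_sum: "(\<Sum>u\<in>R. P0 u) = 1"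
    and kernel_nonneg: "\<And>u s. 0 \<le> P0 u + c u s"
    and c_sum: "\<And>s. (\<Sum>u\<in>R. c u s) = 0"
    and \<xi>_meas[measurable]: "\<And>t x. (\<lambda>\<omega>. \<xi> \<omega> t x) \<in> measurable M (count_space UNIV)"
    and X_meas[measurable]: "\<And>t. (\<lambda>\<omega>. X \<omega> t) \<in> measurable M (count_space UNIV)"
    and annealed_law:
      "\<And>(F :: (nat \<times> (int ^ 'n)) set) (\<sigma> :: nat \<times> (int ^ 'n) \<Rightarrow> 's) (t :: nat) (xs :: nat \<Rightarrow> int ^ 'n).
        finite F \<Longrightarrow> (\<forall>r<t. (r, xs r) \<in> F) \<Longrightarrow>
        measure M {\<omega> \<in> space M. (\<forall>p\<in>F. \<xi> \<omega> (fst p) (snd p) = \<sigma> p) \<and> (\<forall>r\<le>t. X \<omega> r = xs r)}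
        = (if xs 0 = x0 then 1 else 0) * (\<Prod>p\<in>F. pmf \<pi> (\<sigma> p))
          * (\<Prod>r<t. P0 (xs (Suc r) - xs r) + c (xs (Suc r) - xs r) (\<sigma> (r, xs r)))"
begin

abbreviation Pb :: "int ^ 'n \<Rightarrow> real" where
  "Pb \<equiv> Pbar \<pi> P0 c"

definition env_path_event :: "nat \<Rightarrow> (nat \<times> (int ^ 'n) \<Rightarrow> 's) \<Rightarrow> nat \<Rightarrow> (nat \<Rightarrow> int ^ 'n) \<Rightarrow> 'w set" where
  "env_path_event k \<sigma> t xs =
    {\<omega>\<in>space M. (\<forall>r<k. \<xi> \<omega> r (xs r) = \<sigma> (r, xs r)) \<and> (\<forall>r\<le>t. X \<omega> r = xs r)}"

lemma env_path_event_in_events[measurable]: "env_path_event k \<sigma> t xs \<in> events"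
  unfolding env_path_event_def by measurable

lemma measure_env_path_event:
  assumes "k \<le> t"
  shows "measure M (env_path_event k \<sigma> t xs)
    = (if xs 0 = x0 then 1 else 0)
      * (\<Prod>r<k. pmf \<pi> (\<sigma> (r, xs r)) * (P0 (xs (Suc r) - xs r) + c (xs (Suc r) - xs r) (\<sigma> (r, xs r))))
      * (\<Prod>r\<in>{k..<t}. Pb (xs (Suc r) - xs r))"
  using assms
proof (induction k arbitrary: \<sigma> rule: inc_induct)
  case base
  have inj: "inj_on (\<lambda>r. (r, xs r)) {..<t}" by (auto simp: inj_on_def)
  let ?F = "(\<lambda>r. (r, xs r)) ` {..<t}"
  have "env_path_event t \<sigma> t xs
      = {\<omega>\<in>space M. (\<forall>p\<in>?F. \<xi> \<omega> (fst p) (snd p) = \<sigma> p) \<and> (\<forall>r\<le>t. X \<omega> r = xs r)}"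
    by (auto simp: env_path_event_def)
  moreover have "measure M {\<omega>\<in>space M. (\<forall>p\<in>?F. \<xi> \<omega> (fst p) (snd p) = \<sigma> p) \<and> (\<forall>r\<le>t. X \<omega> r = xs r)}
      = (if xs 0 = x0 then 1 else 0) * (\<Prod>p\<in>?F. pmf \<pi> (\<sigma> p))
        * (\<Prod>r<t. P0 (xs (Suc r) - xs r) + c (xs (Suc r) - xs r) (\<sigma> (r, xs r)))"
    by (rule annealed_law) auto
  ultimately show ?case
    by (simp add: prod.reindex[OF inj] prod.distrib mult.assoc)
next
  case (step k)
  let ?C = "(if xs 0 = x0 then 1 else 0)
    * (\<Prod>r<k. pmf \<pi> (\<sigma> (r, xs r)) * (P0 (xs (Suc r) - xs r) + c (xs (Suc r) - xs r) (\<sigma> (r, xs r))))"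
  let ?B = "\<Prod>r\<in>{Suc k..<t}. Pb (xs (Suc r) - xs r)"
  define \<sigma>' where "\<sigma>' s = \<sigma>((k, xs k) := s)" for s
  have split: "env_path_event k \<sigma> t xs = (\<Union>s. env_path_event (Suc k) (\<sigma>' s) t xs)"
    by (auto simp: env_path_event_def \<sigma>'_def less_Suc_eq)
  have "disjoint_family (\<lambda>s. env_path_event (Suc k) (\<sigma>' s) t xs)"
    by (auto simp: disjoint_family_on_def env_path_event_def \<sigma>'_def)
  then have "measure M (env_path_event k \<sigma> t xs) = (\<Sum>s\<in>UNIV. measure M (env_path_event (Suc k) (\<sigma>' s) t xs))"
    unfolding split by (intro finite_measure_finite_Union) auto
  also have "\<dots> = (\<Sum>s\<in>UNIV. ?C * (pmf \<pi> s * (P0 (xs (Suc k) - xs k) + c (xs (Suc k) - xs k) s)) * ?B)"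
  proof (rule sum.cong[OF refl])
    fix s
    have "(\<Prod>r<k. pmf \<pi> (\<sigma>' s (r, xs r)) * (P0 (xs (Suc r) - xs r) + c (xs (Suc r) - xs r) (\<sigma>' s (r, xs r))))
        = (\<Prod>r<k. pmf \<pi> (\<sigma> (r, xs r)) * (P0 (xs (Suc r) - xs r) + c (xs (Suc r) - xs r) (\<sigma> (r, xs r))))"
      by (rule prod.cong) (auto simp: \<sigma>'_def)
    then show "measure M (env_path_event (Suc k) (\<sigma>' s) t xs)
        = ?C * (pmf \<pi> s * (P0 (xs (Suc k) - xs k) + c (xs (Suc k) - xs k) s)) * ?B"
      by (simp add: step.IH \<sigma>'_def mult_ac)
  qed
  also have "\<dots> = ?C * Pb (xs (Suc k) - xs k) * ?B"
    by (simp add: Pbar_eq_sum_kernel sum_distrib_left sum_distrib_right mult_ac)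
  also have "\<dots> = ?C * (\<Prod>r\<in>{k..<t}. Pb (xs (Suc r) - xs r))"
    using step.hyps by (simp add: prod.atLeast_Suc_lessThan)
  finally show ?case .
qed

lemma prob_path:
  "prob {\<omega>\<in>space M. \<forall>r\<le>t. X \<omega> r = xs r}
    = (if xs 0 = x0 then 1 else 0) * (\<Prod>r<t. Pb (xs (Suc r) - xs r))"
  using measure_env_path_event[of 0 t undefined xs]
  by (simp add: env_path_event_def atLeast0LessThan)

definition increment :: "nat \<Rightarrow> 'w \<Rightarrow> int ^ 'n" where
  "increment r \<omega> = X \<omega> (Suc r) - X \<omega> r"

lemma increment_measurable[measurable]: "increment r \<in> measurable M (count_space UNIV)"
proof -
  have "(\<lambda>\<omega>. (\<lambda>x \<omega>. X \<omega> (Suc r) - x) (X \<omega> r) \<omega>) \<in> measurable M (count_space UNIV)"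
    by (rule measurable_compose_countable[OF _ X_meas]) (rule measurable_compose[OF X_meas], simp)
  then show ?thesis by (simp add: increment_def[abs_def])
qed

lemma AE_start: "AE \<omega> in M. X \<omega> 0 = x0"
proof -
  have "prob {\<omega>\<in>space M. X \<omega> 0 = x0} = 1"
    using prob_path[of 0 "\<lambda>_. x0"] by simp
  then show ?thesis by (auto dest: AE_prob_1)
qed

lemma increments_eq_iff_path:
  assumes "X \<omega> 0 = x0"
  shows "(\<forall>r<t. increment r \<omega> = us r) \<longleftrightarrow> (\<forall>r\<le>t. X \<omega> r = x0 + (\<Sum>q<r. us q))"
proof (induction t)
  case 0
  then show ?case using assms by simp
next
  case (Suc t)
  have "X \<omega> (Suc t) = x0 + (\<Sum>q<Suc t. us q) \<longleftrightarrow> increment t \<omega> = us t"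
    if "X \<omega> t = x0 + (\<Sum>q<t. us q)"
    using that by (auto simp: increment_def algebra_simps)
  with Suc show ?case
    by (auto simp: less_Suc_eq le_Suc_eq)
qed

lemma prob_increments_eq: "prob {\<omega>\<in>space M. \<forall>r<t. increment r \<omega> = us r} = (\<Prod>r<t. Pb (us r))"
proof -
  have "prob {\<omega>\<in>space M. \<forall>r<t. increment r \<omega> = us r}
      = prob {\<omega>\<in>space M. \<forall>r\<le>t. X \<omega> r = x0 + (\<Sum>q<r. us q)}"
    by (rule finite_measure_eq_AE) (use AE_start increments_eq_iff_path in auto)
  then show ?thesis by (simp add: prob_path)
qed

lemma Pbar_nonneg: "0 \<le> Pb u"
  unfolding Pbar_eq_sum_kernel using kernel_nonneg by (intro sum_nonneg mult_nonneg_nonneg) auto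

lemma Pbar_supp: "u \<notin> R \<Longrightarrow> Pb u = 0"
  by (simp add: Pbar_def P0_supp c_supp)

lemma sum_Pbar: "(\<Sum>u\<in>R. Pb u) = 1"
proof -
  have "(\<Sum>u\<in>R. Pb u) = (\<Sum>u\<in>R. P0 u) + (\<Sum>s\<in>UNIV. pmf \<pi> s * (\<Sum>u\<in>R. c u s))"
    by (simp add: Pbar_def sum.distrib sum_distrib_left) (rule sum.swap)
  then show ?thesis by (simp add: P0_sum c_sum)
qed

lemma prob_increments_in:
  "prob {\<omega>\<in>space M. \<forall>r<t. increment r \<omega> \<in> A r} = (\<Prod>r<t. \<Sum>u\<in>A r \<inter> R. Pb u)"
  by (rule prob_prefix_in_eq_prod) (use R_fin in \<open>auto simp: prob_increments_eq Pbar_supp Pbar_nonneg\<close>)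

lemma prob_increment_in: "prob {\<omega>\<in>space M. increment r \<omega> \<in> B} = (\<Sum>u\<in>B \<inter> R. Pb u)"
  by (rule prob_in_eq_of_prefix_law[OF prob_increments_in]) (simp add: sum_Pbar)

lemma indep_increments: "indep_vars (\<lambda>_. count_space UNIV) increment {..<t}"
  by (rule indep_vars_of_prefix_law[OF _ prob_increments_in]) (simp_all add: sum_Pbar)

lemma AE_increment_in_support: "AE \<omega> in M. \<forall>r. increment r \<omega> \<in> R"
proof (subst AE_all_countable, intro allI)
  fix r
  have "prob {\<omega>\<in>space M. increment r \<omega> \<in> R} = 1"
    by (simp add: prob_increment_in sum_Pbar)
  then show "AE \<omega> in M. increment r \<omega> \<in> R" by (auto dest: AE_prob_1)
qed

lemma expectation_increment:
  "expectation (\<lambda>\<omega>. f (increment r \<omega>)) = (\<Sum>u\<in>R. f u * Pb u)"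
proof -
  have "AE \<omega> in M. increment r \<omega> \<in> R"
    using AE_increment_in_support by eventually_elim simp
  then have "expectation (\<lambda>\<omega>. f (increment r \<omega>)) = (\<Sum>u\<in>R. f u * prob {\<omega>\<in>space M. increment r \<omega> = u})"
    by (intro expectation_finite_range R_fin) simp
  also have "\<dots> = (\<Sum>u\<in>R. f u * Pb u)"
    using prob_increment_in[of r "{_}"] by (intro sum.cong) auto
  finally show ?thesis .
qed

lemma AE_averages_increment_tendsto:
  fixes f :: "int ^ 'n \<Rightarrow> real"
  shows "AE \<omega> in M. (\<lambda>t. (\<Sum>r<t. f (increment r \<omega>)) / real t) \<longlonglongrightarrow> (\<Sum>u\<in>R. f u * Pb u)"
proof (rule AE_averages_tendsto_of_indep_bounded)
  show "indep_vars (\<lambda>_. borel) (\<lambda>r \<omega>. f (increment r \<omega>)) {..<t}" for t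
    by (rule indep_vars_compose2[OF indep_increments]) simp
  \<comment> \<open>widened by 1 because Hoeffding's bound needs a nondegenerate interval\<close>
  show "AE \<omega> in M. f (increment r \<omega>) \<in> {Min (f ` R) - 1..Max (f ` R) + 1}" for r
    using AE_increment_in_support
  proof eventually_elim
    case (elim \<omega>)
    then have "f (increment r \<omega>) \<in> f ` R" by simp
    with R_fin have "Min (f ` R) \<le> f (increment r \<omega>)" "f (increment r \<omega>) \<le> Max (f ` R)"
      by simp_all
    then show ?case by simp
  qed
  obtain u where "u \<in> R" using P0_sum by fastforce
  with R_fin have "Min (f ` R) \<le> f u" "f u \<le> Max (f ` R)"
    by simp_all
  then show "Min (f ` R) - 1 < Max (f ` R) + 1" by simp
qed (rule expectation_increment)

lemma quad_var_tendsto_eta2: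
  "AE \<omega> in M. (\<lambda>t. (1 / real t) *\<^sub>R quad_var (\<lambda>r. rvec (X \<omega> r) - real r *\<^sub>R b) t)
    \<longlonglongrightarrow> eta2 R Pb b"
proof -
  define f where "f i j u = (rvec u $ i - b $ i) * (rvec u $ j - b $ j)" for i j u
  have "AE \<omega> in M. \<forall>i j. (\<lambda>t. (\<Sum>r<t. f i j (increment r \<omega>)) / real t) \<longlonglongrightarrow> (\<Sum>u\<in>R. f i j u * Pb u)"
    by (simp add: AE_all_countable AE_averages_increment_tendsto)
  then show ?thesis
  proof eventually_elim
    case (elim \<omega>)
    have "rvec (X \<omega> (Suc r)) $ i - real (Suc r) * b $ i - (rvec (X \<omega> r) $ i - real r * b $ i)
        = rvec (increment r \<omega>) $ i - b $ i" for r i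
      by (simp add: rvec_def increment_def algebra_simps)
    then have coord: "((1 / real t) *\<^sub>R quad_var (\<lambda>r. rvec (X \<omega> r) - real r *\<^sub>R b) t) $ i $ j
        = (\<Sum>r<t. f i j (increment r \<omega>)) / real t" for t i j
      by (simp add: quad_var_def f_def)
    have limit: "eta2 R Pb b $ i $ j = (\<Sum>u\<in>R. f i j u * Pb u)" for i j
      by (simp add: eta2_def f_def)
    show ?case
      by (intro vec_tendstoI) (simp only: coord limit elim)
  qed
qed

end

theorem corollary3p4:
  fixes \<pi> :: "'s::finite pmf"
    and P0 :: "int ^ 'n \<Rightarrow> real"
    and c :: "int ^ 'n \<Rightarrow> 's \<Rightarrow> real"
    and R :: "(int ^ 'n) set"
    and bc :: "real ^ 'n"
    and x0 :: "int ^ 'n"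
    and M :: "'w measure"
    and \<xi> :: "'w \<Rightarrow> nat \<Rightarrow> int ^ 'n \<Rightarrow> 's"
    and X :: "'w \<Rightarrow> nat \<Rightarrow> int ^ 'n"
  assumes R_fin: "finite R"
    and P0_supp: "\<And>u. u \<notin> R \<Longrightarrow> P0 u = 0"
    and c_supp: "\<And>u s. u \<notin> R \<Longrightarrow> c u s = 0"
    and P0_nonneg: "\<And>u. P0 u \<ge> 0"
    and P0_sum: "(\<Sum>u\<in>R. P0 u) = 1"
    and kernel_bounds: "\<And>u s. 0 \<le> P0 u + c u s \<and> P0 u + c u s \<le> 1"
    and c_sum: "\<And>s. (\<Sum>u\<in>R. c u s) = 0"
    and c_mean: "\<And>u. (\<Sum>s\<in>UNIV. c u s * pmf \<pi> s) = 0"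
    and c_drift: "\<And>s. (\<Sum>u\<in>R. c u s *\<^sub>R rvec u) = bc"
    and M_prob: "prob_space M"
    and \<xi>_meas: "\<And>t x. (\<lambda>\<omega>. \<xi> \<omega> t x) \<in> measurable M (count_space UNIV)"
    and X_meas: "\<And>t. (\<lambda>\<omega>. X \<omega> t) \<in> measurable M (count_space UNIV)"
    and annealed_law:
      "\<And>(F :: (nat \<times> (int ^ 'n)) set) (\<sigma> :: nat \<times> (int ^ 'n) \<Rightarrow> 's) (t :: nat) (xs :: nat \<Rightarrow> int ^ 'n).
        finite F \<Longrightarrow> (\<forall>r<t. (r, xs r) \<in> F) \<Longrightarrow>
        measure M {\<omega> \<in> space M. (\<forall>p\<in>F. \<xi> \<omega> (fst p) (snd p) = \<sigma> p) \<and> (\<forall>r\<le>t. X \<omega> r = xs r)}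
        = (if xs 0 = x0 then 1 else 0) * (\<Prod>p\<in>F. pmf \<pi> (\<sigma> p))
          * (\<Prod>r<t. P0 (xs (Suc r) - xs r) + c (xs (Suc r) - xs r) (\<sigma> (r, xs r)))"
  shows "AE \<omega> in M.
    (\<lambda>t. (1 / real t) *\<^sub>R quad_var
            (\<lambda>r. rvec (X \<omega> r) - real r *\<^sub>R ((\<Sum>u\<in>R. P0 u *\<^sub>R rvec u) + bc)) t)
    \<longlonglongrightarrow> eta2 R (Pbar \<pi> P0 c) ((\<Sum>u\<in>R. P0 u *\<^sub>R rvec u) + bc)"
proof -
  interpret annealed_walk M \<pi> P0 c R x0 \<xi> X
    by (rule annealed_walk.intro[OF M_prob], rule annealed_walk_axioms.intro)
       (use assms in auto)
  show ?thesis by (rule quad_var_tendsto_eta2)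
qed

end
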